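(* Let $\mathcal{S}=(S,\overline{S})$ be a bisection, $u$ a vertex of the graph, $(A_u,B_u)$ a $u$-pair for $\mathcal{S}$, and $\mathcal{T}$ the bisection associated with $(A_u,B_u)$. Then $\mathrm{def}_{\mathcal{T}}(u)\ge a_u+1$.
   Context: $G$ is a finite simple undirected graph with an odd number $n$ of vertices; $N(u)$ is the set of neighbors of $u$ and $\overline{N}(u)$ the set of vertices other than $u$ not adjacent to $u$. Each vertex $x$ has stubbornness $\alpha_x\in(0,1)$ and $a_x=\lfloor\alpha_x/(1-\alpha_x)\rfloor$. $W(A,B)$ is the number of edges with one endpoint in $A$ and the other in $B$. A bisection $(S,\overline{S})$ partitions the vertices with $|S|=\frac{n+1}{2}$, $|\overline{S}|=\frac{n-1}{2}$. Deficiency: $\mathrm{def}_{\mathcal{S}}(x)=W(x,S)-W(x,\overline{S})$ for $x\in S$, $W(x,\overline{S})-W(x,S)$ for $x\in\overline{S}$. Rank: $\mathrm{rank}_{\mathcal{S}}(u)=\lceil (a_u+1-\mathrm{def}_{\mathcal{S}}(u))/2\rceil$. A $u$-pair for $\mathcal{S}$ is a pair of sets $(A_u,B_u)$ with: if $u\in S$, $A_u\subseteq S\cap\overline{N}(u)$, $B_u\subseteq\overline{S}\cap N(u)$, $|A_u|=|B_u|=\mathrm{rank}_{\mathcal{S}}(u)$; if $u\in\overline{S}$, $A_u\subseteq S\cap N(u)$, $B_u\subseteq\overline{S}\cap\overline{N}(u)$, $|A_u|=\mathrm{rank}_{\mathcal{S}}(u)$, $|B_u|=\mathrm{rank}_{\mathcal{S}}(u)-1$.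 The bisection associated with the $u$-pair is $\mathcal{T}=(S\setminus A_u\cup B_u,\ \overline{S}\setminus B_u\cup A_u)$ if $u\in S$, and $\mathcal{T}=(\overline{S}\setminus B_u\cup A_u,\ S\setminus A_u\cup B_u)$ if $u\in\overline{S}$. *)

theory Defs
  imports Complex_Main
begin

definition simple_graph :: "'a set \<Rightarrow> ('a \<Rightarrow> 'a \<Rightarrow> bool) \<Rightarrow> bool" where
  "simple_graph V E \<longleftrightarrow> finite V \<and> (\<forall>x y. E x y \<longrightarrow> x \<in> V \<and> y \<in> V)
     \<and> (\<forall>x y. E x y \<longrightarrow> E y x) \<and> (\<forall>x. \<not> E x x)"

definition W :: "('a \<Rightarrow> 'a \<Rightarrow> bool) \<Rightarrow> 'a set \<Rightarrow> 'a set \<Rightarrow> nat" where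
  "W E A B = card {{x, y} | x y. x \<in> A \<and> y \<in> B \<and> E x y}"

definition nbhd :: "('a \<Rightarrow> 'a \<Rightarrow> bool) \<Rightarrow> 'a \<Rightarrow> 'a set" where
  "nbhd E u = {v. E u v}"

definition non_nbhd :: "'a set \<Rightarrow> ('a \<Rightarrow> 'a \<Rightarrow> bool) \<Rightarrow> 'a \<Rightarrow> 'a set" where
  "non_nbhd V E u = {v \<in> V. v \<noteq> u \<and> \<not> E u v}"

definition stub_a :: "('a \<Rightarrow> real) \<Rightarrow> 'a \<Rightarrow> int" where
  "stub_a \<alpha> x = \<lfloor>\<alpha> x / (1 - \<alpha> x)\<rfloor>"

definition is_bisection :: "'a set \<Rightarrow> 'a set \<Rightarrow> 'a set \<Rightarrow> bool" where
  "is_bisection V S Sb \<longleftrightarrow> S \<subseteq> V \<and> Sb = V - S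
     \<and> card S = (card V + 1) div 2 \<and> card Sb = (card V - 1) div 2"

definition deficiency :: "('a \<Rightarrow> 'a \<Rightarrow> bool) \<Rightarrow> 'a set \<Rightarrow> 'a set \<Rightarrow> 'a \<Rightarrow> int" where
  "deficiency E S Sb x =
     (if x \<in> S then int (W E {x} S) - int (W E {x} Sb)
      else int (W E {x} Sb) - int (W E {x} S))"

definition rank :: "('a \<Rightarrow> real) \<Rightarrow> ('a \<Rightarrow> 'a \<Rightarrow> bool) \<Rightarrow> 'a set \<Rightarrow> 'a set \<Rightarrow> 'a \<Rightarrow> int" where
  "rank \<alpha> E S Sb u = \<lceil>real_of_int (stub_a \<alpha> u + 1 - deficiency E S Sb u) / 2\<rceil>"

definition is_upair :: "'a set \<Rightarrow> ('a \<Rightarrow> 'a \<Rightarrow> bool) \<Rightarrow> ('a \<Rightarrow> real) \<Rightarrow> 'a set \<Rightarrow> 'a set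
    \<Rightarrow> 'a \<Rightarrow> 'a set \<Rightarrow> 'a set \<Rightarrow> bool" where
  "is_upair V E \<alpha> S Sb u A B \<longleftrightarrow>
     (u \<in> S \<longrightarrow> A \<subseteq> S \<inter> non_nbhd V E u \<and> B \<subseteq> Sb \<inter> nbhd E u
        \<and> int (card A) = rank \<alpha> E S Sb u \<and> int (card B) = rank \<alpha> E S Sb u)
   \<and> (u \<in> Sb \<longrightarrow> A \<subseteq> S \<inter> nbhd E u \<and> B \<subseteq> Sb \<inter> non_nbhd V E u
        \<and> int (card A) = rank \<alpha> E S Sb u \<and> int (card B) = rank \<alpha> E S Sb u - 1)"

definition assoc_bisection :: "'a set \<Rightarrow> 'a set \<Rightarrow> 'a \<Rightarrow> 'a set \<Rightarrow> 'a set \<Rightarrow> 'a set \<times> 'a set" where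
  "assoc_bisection S Sb u A B =
     (if u \<in> S then ((S - A) \<union> B, (Sb - B) \<union> A) else ((Sb - B) \<union> A, (S - A) \<union> B))"

end

theory Submission
  imports Defs
begin

text \<open>Moving the chosen non-neighbours of \<open>u\<close> away from its side and the chosen neighbours
  onto its side keeps \<open>u\<close> where it is and raises its deficiency by twice the number of
  neighbours moved. In a \<open>u\<close>-pair that number is the rank, and
  \<open>2 \<lceil>(a\<^sub>u + 1 - def(u)) / 2\<rceil> \<ge> a\<^sub>u + 1 - def(u)\<close>.\<close>

lemma W_singleton: "W E {u} X = card (nbhd E u \<inter> X)"
proof -
  have "{{x, y} | x y. x \<in> {u} \<and> y \<in> X \<and> E x y} = (\<lambda>y. {u, y}) ` (nbhd E u \<inter> X)"
    by (auto simp: nbhd_def)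
  moreover have "inj_on (\<lambda>y. {u, y}) (nbhd E u \<inter> X)"
    by (auto simp: inj_on_def doubleton_eq_iff)
  ultimately show ?thesis
    unfolding W_def by (simp add: card_image)
qed

lemma simple_graph_finite_nbhd: "simple_graph V E \<Longrightarrow> finite (nbhd E u)"
  unfolding simple_graph_def nbhd_def by (auto intro: finite_subset)

lemma deficiency_swap:
  assumes "finite (nbhd E u)" and "u \<in> P" and "P \<inter> Q = {}"
    and "u \<notin> X" and "X \<inter> nbhd E u = {}" and "Y \<subseteq> Q \<inter> nbhd E u"
  shows "deficiency E (P - X \<union> Y) (Q - Y \<union> X) u
           = int (W E {u} P) - int (W E {u} Q) + 2 * int (card Y)"
proof -
  let ?N = "nbhd E u"
  have fin_Y: "finite Y"
    using assms(1,6) by (auto intro: finite_subset)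
  have "?N \<inter> (P - X \<union> Y) = (?N \<inter> P) \<union> Y" and "(?N \<inter> P) \<inter> Y = {}"
    using assms(3,5,6) by auto
  then have own: "card (?N \<inter> (P - X \<union> Y)) = card (?N \<inter> P) + card Y"
    using assms(1) fin_Y by (simp add: card_Un_disjoint)
  have "?N \<inter> (Q - Y \<union> X) = (?N \<inter> Q) - Y" and "Y \<subseteq> ?N \<inter> Q"
    using assms(5,6) by auto
  moreover have "card Y \<le> card (?N \<inter> Q)"
    using assms(1,6) by (simp add: card_mono)
  ultimately have other: "int (card (?N \<inter> (Q - Y \<union> X))) = int (card (?N \<inter> Q)) - int (card Y)"
    using fin_Y by (simp add: card_Diff_subset)
  have "u \<in> P - X \<union> Y"
    using assms(2,4) by blast
  then show ?thesis
    unfolding deficiency_def W_singleton using own other by simp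
qed

lemma twice_rank_ge: "stub_a \<alpha> u + 1 - deficiency E S Sb u \<le> 2 * rank \<alpha> E S Sb u"
proof -
  have "real_of_int (stub_a \<alpha> u + 1 - deficiency E S Sb u) / 2 \<le> real_of_int (rank \<alpha> E S Sb u)"
    unfolding rank_def by (rule le_of_int_ceiling)
  then have "real_of_int (stub_a \<alpha> u + 1 - deficiency E S Sb u) \<le> real_of_int (2 * rank \<alpha> E S Sb u)"
    by simp
  then show ?thesis
    by (simp only: of_int_le_iff)
qed

theorem lemma3:
  fixes V :: "'a set" and E :: "'a \<Rightarrow> 'a \<Rightarrow> bool" and \<alpha> :: "'a \<Rightarrow> real"
    and S Sb A B :: "'a set" and u :: 'a
  assumes "simple_graph V E"
    and "odd (card V)"
    and "\<forall>x\<in>V. 0 < \<alpha> x \<and> \<alpha> x < 1"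
    and "is_bisection V S Sb"
    and "u \<in> V"
    and "is_upair V E \<alpha> S Sb u A B"
  shows "deficiency E (fst (assoc_bisection S Sb u A B)) (snd (assoc_bisection S Sb u A B)) u
           \<ge> stub_a \<alpha> u + 1"
proof -
  have fin: "finite (nbhd E u)"
    using assms(1) by (rule simple_graph_finite_nbhd)
  have disj: "S \<inter> Sb = {}" and side: "u \<in> S \<or> u \<in> Sb"
    using assms(4,5) unfolding is_bisection_def by auto
  have "stub_a \<alpha> u + 1 - deficiency E S Sb u \<le> 2 * rank \<alpha> E S Sb u"
    by (rule twice_rank_ge)
  moreover have "deficiency E (fst (assoc_bisection S Sb u A B)) (snd (assoc_bisection S Sb u A B)) u
      = deficiency E S Sb u + 2 * rank \<alpha> E S Sb u"
  proof (cases "u \<in> S")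
    case True
    with assms(6) have "u \<notin> A" "A \<inter> nbhd E u = {}" "B \<subseteq> Sb \<inter> nbhd E u"
      and "int (card B) = rank \<alpha> E S Sb u"
      unfolding is_upair_def non_nbhd_def nbhd_def by auto
    with True show ?thesis
      using deficiency_swap[OF fin True disj] by (simp add: assoc_bisection_def deficiency_def)
  next
    case False
    with side assms(6) have "u \<in> Sb" "u \<notin> B" "B \<inter> nbhd E u = {}" "A \<subseteq> S \<inter> nbhd E u"
      and "int (card A) = rank \<alpha> E S Sb u"
      unfolding is_upair_def non_nbhd_def nbhd_def by auto
    with False show ?thesis
      using deficiency_swap[of E u Sb S B A] fin disj
      by (simp add: assoc_bisection_def deficiency_def Int_commute)
  qed
  ultimately show ?thesis
    by linarith
qed

end
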